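(* Let $\delta,\xi\in(0,1/2)$, $\lambda\in(0,1/2)$, let $n$ be a positive integer and $M=2^{n(C-\xi)}$ an integer. Suppose $\{(\mathbf u_k,\mathcal E_k):k=1,\dots,M\}$ is a transmission code with distinct $\mathbf u_k\in\mathcal X^n$, pairwise disjoint $\mathcal E_k\subseteq\mathcal Y^n$, and $W(\mathcal E_k^c\mid\mathbf u_k)\le\delta$ for all $k$; let $\mathcal Z=\{\mathbf u_1,\dots,\mathbf u_M\}$. Let $\epsilon$ satisfy $\frac16>\epsilon\ge 2^{-n(C-\xi)}$, let $M'=\lceil\epsilon M\rceil$, and let $m$ be a positive integer with $2^m\le \binom{M'}{\lceil\lambda M'\rceil}^{-1}M'^{-1}\left(\frac{1-\epsilon}{2\epsilon}\right)^{\lceil\lambda M'\rceil}$. Let $(A_i)_{i\in\{0,1\}^m}$ be subsets of $\mathcal Z$ with $|A_i|=M'$ and $|A_i\cap A_{i'}|<\lambda M'$ for $i\ne i'$. Define the encoder $Q_i(\mathbf x)=\mathbf 1_{\mathbf x\in A_i}/|A_i|$ for $i\in\{0,1\}^m$ and, for each $f\in\mathcal F_m^{\mathrm W}(\le S)$, the decoding set $\mathcal D_f=\bigcup_{k:\,\mathbf u_k\in B_f}\mathcal E_k$ where $B_f=\bigcup_{\ell\in f^{-1}[1]}A_\ell$. Then this is an $(n,m,\mathcal F_m^{\mathrm W}(\le S),\lambda_1,\lambda_2)$ BFC code with $\lambda_1=\delta$ and $\lambda_2=S\lambda+\delta$.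
   Context: A channel with input alphabet $\mathcal X$ and output alphabet $\mathcal Y$ is given by conditional distributions $W(\cdot\mid x^n)$ on $\mathcal Y^n$; $C$ is its Shannon capacity. $\mathcal F_m$ is the set of all Boolean functions $\{0,1\}^m\to\{0,1\}$ and $\mathcal F_m^{\mathrm W}(\le S)=\{f\in\mathcal F_m:|f^{-1}[1]|\le S\}$. For $\mathcal F\subseteq\mathcal F_m$, an $(n,m,\mathcal F,\lambda_1,\lambda_2)$ BFC code consists of probability distributions $Q_i$ on $\mathcal X^n$ ($i\in\{0,1\}^m$) and sets $D_f\subseteq\mathcal Y^n$ ($f\in\mathcal F$) such that for all $i,f$: if $f(i)=1$ then $Q_iW(D_f^c)\le\lambda_1$, and if $f(i)=0$ then $Q_iW(D_f)\le\lambda_2$, where $QW(D)=\sum_xQ(x)W(D\mid x)$. *)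

theory Defs
  imports Complex_Main
begin

definition words :: "nat \<Rightarrow> 'a list set" where
  "words n = {xs. length xs = n}"

definition channel :: "('x list \<Rightarrow> 'y list \<Rightarrow> real) \<Rightarrow> bool" where
  "channel W \<longleftrightarrow> (\<forall>xs ys. 0 \<le> W xs ys) \<and>
     (\<forall>xs ys. length ys \<noteq> length xs \<longrightarrow> W xs ys = 0) \<and>
     (\<forall>xs. (\<Sum>ys\<in>words (length xs). W xs ys) = 1)"

definition Wset :: "('x list \<Rightarrow> 'y list \<Rightarrow> real) \<Rightarrow> 'x list \<Rightarrow> 'y list set \<Rightarrow> real" where
  "Wset W xs D = (\<Sum>ys\<in>D \<inter> words (length xs). W xs ys)"

definition QW :: "nat \<Rightarrow> ('x list \<Rightarrow> real) \<Rightarrow> ('x list \<Rightarrow> 'y list \<Rightarrow> real) \<Rightarrow> 'y list set \<Rightarrow> real" where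
  "QW n Q W D = (\<Sum>xs\<in>words n. Q xs * Wset W xs D)"

definition prob_dist_on :: "'a set \<Rightarrow> ('a \<Rightarrow> real) \<Rightarrow> bool" where
  "prob_dist_on A Q \<longleftrightarrow> (\<forall>x. 0 \<le> Q x) \<and> (\<forall>x. x \<notin> A \<longrightarrow> Q x = 0) \<and> (\<Sum>x\<in>A. Q x) = 1"

text \<open>Boolean functions {0,1}^m -> {0,1}: inputs are bool lists of length m; we
  normalise the function to be False outside {0,1}^m.\<close>
definition boolfuns :: "nat \<Rightarrow> (bool list \<Rightarrow> bool) set" where
  "boolfuns m = {f. \<forall>i. length i \<noteq> m \<longrightarrow> \<not> f i}"

definition preimage1 :: "nat \<Rightarrow> (bool list \<Rightarrow> bool) \<Rightarrow> bool list set" where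
  "preimage1 m f = {i \<in> words m. f i}"

definition boolfuns_weight :: "nat \<Rightarrow> nat \<Rightarrow> (bool list \<Rightarrow> bool) set" where
  "boolfuns_weight m S = {f \<in> boolfuns m. card (preimage1 m f) \<le> S}"

definition bfc_code :: "nat \<Rightarrow> nat \<Rightarrow> (bool list \<Rightarrow> bool) set \<Rightarrow> real \<Rightarrow> real \<Rightarrow>
    ('x list \<Rightarrow> 'y list \<Rightarrow> real) \<Rightarrow> (bool list \<Rightarrow> 'x list \<Rightarrow> real) \<Rightarrow>
    ((bool list \<Rightarrow> bool) \<Rightarrow> 'y list set) \<Rightarrow> bool" where
  "bfc_code n m F lam1 lam2 W Q D \<longleftrightarrow>
     (\<forall>i\<in>words m. prob_dist_on (words n) (Q i)) \<and>
     (\<forall>f\<in>F. D f \<subseteq> words n) \<and>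
     (\<forall>i\<in>words m. \<forall>f\<in>F.
        (f i \<longrightarrow> QW n (Q i) W (words n - D f) \<le> lam1) \<and>
        (\<not> f i \<longrightarrow> QW n (Q i) W (D f) \<le> lam2))"

end

theory Submission
  imports Defs
begin

text \<open>If \<open>f i\<close> holds then \<open>A\<^sub>i \<subseteq> B\<^sub>f\<close>, so
  \<open>D\<^sub>f\<close> is missed only by a transmission error, of probability at most \<open>\<delta>\<close>. If \<open>f i\<close> fails, a
  codeword of \<open>A\<^sub>i\<close> outside \<open>B\<^sub>f\<close> has a decoding set disjoint from \<open>D\<^sub>f\<close>, so it lands in \<open>D\<^sub>f\<close>
  with probability at most \<open>\<delta>\<close>; and \<open>A\<^sub>i\<close> meets each of the at most \<open>S\<close> sets \<open>A\<^sub>l\<close> making up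
  \<open>B\<^sub>f\<close> in fewer than \<open>\<lambda>M'\<close> codewords, so a uniform codeword of \<open>A\<^sub>i\<close> lies in \<open>B\<^sub>f\<close> with
  probability at most \<open>S\<lambda>\<close>.\<close>

definition uniform_on :: "'a set \<Rightarrow> 'a \<Rightarrow> real" where
  "uniform_on A = (\<lambda>x. if x \<in> A then 1 / real (card A) else 0)"

definition decoding_set :: "('k \<Rightarrow> 'x) \<Rightarrow> ('k \<Rightarrow> 'y set) \<Rightarrow> 'k set \<Rightarrow> 'x set \<Rightarrow> 'y set" where
  "decoding_set u E K B = \<Union>{E k | k. k \<in> K \<and> u k \<in> B}"

lemma finite_words: "finite (words n :: ('a::finite) list set)"
proof -
  have "words n = {xs. set xs \<subseteq> (UNIV::'a set) \<and> length xs = n}"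
    by (auto simp: words_def)
  then show ?thesis
    using finite_lists_length_eq[of "UNIV::'a set" n] by simp
qed

lemma Wset_mono:
  fixes W :: "('x::finite) list \<Rightarrow> ('y::finite) list \<Rightarrow> real"
  assumes "channel W" "D \<inter> words (length xs) \<subseteq> D'"
  shows "Wset W xs D \<le> Wset W xs D'"
  unfolding Wset_def
  by (rule sum_mono2) (use assms finite_words in \<open>auto simp: channel_def\<close>)

lemma Wset_le_1:
  fixes W :: "('x::finite) list \<Rightarrow> ('y::finite) list \<Rightarrow> real"
  assumes "channel W"
  shows "Wset W xs D \<le> 1"
proof -
  have "Wset W xs D \<le> Wset W xs (words (length xs))"
    by (rule Wset_mono[OF assms]) blast
  also have "\<dots> = 1"
    using assms by (simp add: Wset_def channel_def)
  finally show ?thesis .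
qed

lemma prob_dist_on_uniform_on:
  assumes "finite U" "A \<subseteq> U" "A \<noteq> {}"
  shows "prob_dist_on U (uniform_on A)"
proof -
  have "finite A" using assms finite_subset by blast
  have "(\<Sum>x\<in>U. uniform_on A x) = (\<Sum>x\<in>A. 1 / real (card A))"
    using assms by (intro sum.mono_neutral_cong_right) (auto simp: uniform_on_def)
  also have "\<dots> = 1"
    using \<open>finite A\<close> \<open>A \<noteq> {}\<close> by simp
  finally show ?thesis
    using assms by (auto simp: prob_dist_on_def uniform_on_def)
qed

lemma QW_uniform_on:
  fixes W :: "('x::finite) list \<Rightarrow> ('y::finite) list \<Rightarrow> real"
  assumes "A \<subseteq> words n"
  shows "QW n (uniform_on A) W D = (\<Sum>xs\<in>A. Wset W xs D) / real (card A)"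
proof -
  have "QW n (uniform_on A) W D = (\<Sum>xs\<in>A. Wset W xs D / real (card A))"
    unfolding QW_def using assms finite_words
    by (intro sum.mono_neutral_cong_right) (auto simp: uniform_on_def)
  then show ?thesis
    by (simp add: sum_divide_distrib)
qed

lemma QW_uniform_on_le:
  fixes W :: "('x::finite) list \<Rightarrow> ('y::finite) list \<Rightarrow> real"
  assumes "channel W" "A \<subseteq> words n" "0 \<le> \<delta>"
    and "\<forall>xs\<in>A - B. Wset W xs D \<le> \<delta>"
  shows "QW n (uniform_on A) W D \<le> real (card (A \<inter> B)) / real (card A) + \<delta>"
proof -
  have "finite A" using assms(2) finite_words finite_subset by blast
  have "(\<Sum>xs\<in>A. Wset W xs D) = (\<Sum>xs\<in>A \<inter> B. Wset W xs D) + (\<Sum>xs\<in>A - B. Wset W xs D)"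
    using \<open>finite A\<close> by (rule sum.Int_Diff)
  also have "\<dots> \<le> (\<Sum>xs\<in>A \<inter> B. 1) + (\<Sum>xs\<in>A - B. \<delta>)"
    using assms(1,4) Wset_le_1 by (intro add_mono sum_mono) auto
  also have "\<dots> \<le> real (card (A \<inter> B)) + real (card A) * \<delta>"
    using \<open>finite A\<close> \<open>0 \<le> \<delta>\<close> by (simp add: card_mono mult_right_mono)
  finally have "(\<Sum>xs\<in>A. Wset W xs D) \<le> real (card (A \<inter> B)) + real (card A) * \<delta>" .
  then show ?thesis
    using assms(2) \<open>0 \<le> \<delta>\<close>
    by (cases "card A = 0") (auto simp: QW_uniform_on field_simps)
qed

lemma decoding_set_subset:
  assumes "\<forall>k\<in>K. E k \<subseteq> U"
  shows "decoding_set u E K B \<subseteq> U"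
  using assms unfolding decoding_set_def by blast

lemma Wset_compl_decoding_set_le:
  fixes W :: "('x::finite) list \<Rightarrow> ('y::finite) list \<Rightarrow> real"
  assumes "channel W" "\<forall>k\<in>K. Wset W (u k) (words n - E k) \<le> \<delta>"
    and "xs \<in> u ` K" "xs \<in> B"
  shows "Wset W xs (words n - decoding_set u E K B) \<le> \<delta>"
proof -
  obtain k where k: "k \<in> K" "xs = u k"
    using assms(3) by blast
  then have "Wset W xs (words n - decoding_set u E K B) \<le> Wset W xs (words n - E k)"
    using assms(1,4) by (intro Wset_mono) (auto simp: decoding_set_def)
  with k assms(2) show ?thesis
    by fastforce
qed

lemma Wset_decoding_set_le:
  fixes W :: "('x::finite) list \<Rightarrow> ('y::finite) list \<Rightarrow> real"
  assumes "channel W" "\<forall>k\<in>K. \<forall>k'\<in>K. k \<noteq> k' \<longrightarrow> E k \<inter> E k' = {}"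
    and "\<forall>k\<in>K. u k \<in> words n" "\<forall>k\<in>K. Wset W (u k) (words n - E k) \<le> \<delta>"
    and "xs \<in> u ` K" "xs \<notin> B"
  shows "Wset W xs (decoding_set u E K B) \<le> \<delta>"
proof -
  obtain k where k: "k \<in> K" "xs = u k"
    using assms(5) by blast
  have "E k' \<inter> E k = {}" if "k' \<in> K" "u k' \<in> B" for k'
    using assms(2,6) k that by metis
  then have "decoding_set u E K B \<inter> words (length xs) \<subseteq> words n - E k"
    using assms(3) k by (auto simp: decoding_set_def words_def)
  then have "Wset W xs (decoding_set u E K B) \<le> Wset W xs (words n - E k)"
    by (rule Wset_mono[OF assms(1)])
  with k assms(4) show ?thesis
    by fastforce
qed

lemma card_Int_UN_le:
  assumes "finite P" "\<forall>l\<in>P. real (card (A \<inter> B l)) \<le> c"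
  shows "real (card (A \<inter> (\<Union>l\<in>P. B l))) \<le> real (card P) * c"
proof -
  have "card (A \<inter> (\<Union>l\<in>P. B l)) \<le> (\<Sum>l\<in>P. card (A \<inter> B l))"
    unfolding Int_UN_distrib by (rule card_UN_le[OF assms(1)])
  then have "real (card (A \<inter> (\<Union>l\<in>P. B l))) \<le> (\<Sum>l\<in>P. real (card (A \<inter> B l)))"
    by (metis of_nat_le_iff of_nat_sum)
  also have "\<dots> \<le> real (card P) * c"
    using sum_mono[of P "\<lambda>l. real (card (A \<inter> B l))" "\<lambda>_. c"] assms(2) by simp
  finally show ?thesis .
qed

lemma finite_preimage1: "finite (preimage1 m f)"
  unfolding preimage1_def by (rule finite_subset[OF _ finite_words]) blast

lemma card_Int_UN_preimage1_le:
  assumes "\<forall>i\<in>words m. \<forall>i'\<in>words m. i \<noteq> i' \<longrightarrow> real (card (A i \<inter> A i')) \<le> c"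
    and "0 \<le> c" "i \<in> words m" "f \<in> boolfuns_weight m S" "\<not> f i"
  shows "real (card (A i \<inter> (\<Union>l\<in>preimage1 m f. A l))) \<le> real S * c"
proof -
  have "real (card (A i \<inter> (\<Union>l\<in>preimage1 m f. A l))) \<le> real (card (preimage1 m f)) * c"
    using assms(1,3,5) by (intro card_Int_UN_le finite_preimage1) (auto simp: preimage1_def)
  also have "\<dots> \<le> real S * c"
    using assms(2,4) by (intro mult_right_mono) (auto simp: boolfuns_weight_def)
  finally show ?thesis .
qed

lemma bfc_code_uniform_on_decoding_set:
  fixes W :: "('x::finite) list \<Rightarrow> ('y::finite) list \<Rightarrow> real"
  assumes W: "channel W" and \<delta>: "0 \<le> \<delta>" and lam: "0 \<le> lam"
    and u_len: "\<forall>k\<in>K. u k \<in> words n"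
    and E_sub: "\<forall>k\<in>K. E k \<subseteq> words n"
    and E_disj: "\<forall>k\<in>K. \<forall>k'\<in>K. k \<noteq> k' \<longrightarrow> E k \<inter> E k' = {}"
    and E_err: "\<forall>k\<in>K. Wset W (u k) (words n - E k) \<le> \<delta>"
    and A_sub: "\<forall>i\<in>words m. A i \<subseteq> u ` K"
    and A_card: "\<forall>i\<in>words m. card (A i) = L" and L: "0 < L"
    and A_int: "\<forall>i\<in>words m. \<forall>i'\<in>words m. i \<noteq> i' \<longrightarrow> real (card (A i \<inter> A i')) \<le> lam * real L"
  shows "bfc_code n m (boolfuns_weight m S) \<delta> (real S * lam + \<delta>) W
           (\<lambda>i. uniform_on (A i)) (\<lambda>f. decoding_set u E K (\<Union>l\<in>preimage1 m f. A l))"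
proof -
  define B where "B f = (\<Union>l\<in>preimage1 m f. A l)" for f
  have A_codes: "xs \<in> u ` K" if "i \<in> words m" "xs \<in> A i" for i xs
    using A_sub that by blast
  have A_words: "A i \<subseteq> words n" if "i \<in> words m" for i
    using A_sub u_len that by blast
  have missed: "QW n (uniform_on (A i)) W (words n - decoding_set u E K (B f)) \<le> \<delta>"
    if "i \<in> words m" "f i" for i f
  proof -
    have "A i \<subseteq> B f"
      using that by (auto simp: B_def preimage1_def)
    have "Wset W xs (words n - decoding_set u E K (B f)) \<le> \<delta>" if "xs \<in> A i" for xs
      using \<open>A i \<subseteq> B f\<close> that A_codes[OF \<open>i \<in> words m\<close>]
      by (intro Wset_compl_decoding_set_le[OF W E_err]) auto
    then show ?thesis
      using QW_uniform_on_le[OF W A_words[OF that(1)] \<delta>, of "{}"] by simp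
  qed
  have false_alarm: "QW n (uniform_on (A i)) W (decoding_set u E K (B f)) \<le> real S * lam + \<delta>"
    if "i \<in> words m" "f \<in> boolfuns_weight m S" "\<not> f i" for i f
  proof -
    have "Wset W xs (decoding_set u E K (B f)) \<le> \<delta>" if "xs \<in> A i - B f" for xs
      using that A_codes[OF \<open>i \<in> words m\<close>]
      by (intro Wset_decoding_set_le[OF W E_disj u_len E_err]) auto
    then have QW_le: "QW n (uniform_on (A i)) W (decoding_set u E K (B f))
        \<le> real (card (A i \<inter> B f)) / real L + \<delta>"
      using QW_uniform_on_le[OF W A_words[OF that(1)] \<delta>] A_card that(1) by simp
    have "real (card (A i \<inter> B f)) \<le> real S * (lam * real L)"
      unfolding B_def using A_int lam that by (intro card_Int_UN_preimage1_le) auto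
    then have "real (card (A i \<inter> B f)) / real L \<le> real S * lam"
      using L by (simp add: pos_divide_le_eq mult.assoc)
    with QW_le show ?thesis
      by linarith
  qed
  have encoder: "prob_dist_on (words n) (uniform_on (A i))" if "i \<in> words m" for i
    using that A_card L by (intro prob_dist_on_uniform_on[OF finite_words A_words]) auto
  show ?thesis
    unfolding bfc_code_def B_def[symmetric]
    using encoder decoding_set_subset[OF E_sub, of u] missed false_alarm by simp
qed

theorem lemma3:
  fixes W :: "('x::finite) list \<Rightarrow> ('y::finite) list \<Rightarrow> real"
    and C \<delta> \<xi> lam \<epsilon> :: real
    and n m M S :: nat
    and u :: "nat \<Rightarrow> 'x list" and E :: "nat \<Rightarrow> 'y list set"
    and A :: "bool list \<Rightarrow> 'x list set"
  assumes W: "channel W"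
    and \<delta>: "0 < \<delta>" "\<delta> < 1/2"
    and \<xi>: "0 < \<xi>" "\<xi> < 1/2"
    and lam: "0 < lam" "lam < 1/2"
    and n: "0 < n"
    and M: "real M = 2 powr (real n * (C - \<xi>))"
    and u_len: "\<forall>k\<in>{1..M}. u k \<in> words n"
    and u_inj: "inj_on u {1..M}"
    and E_sub: "\<forall>k\<in>{1..M}. E k \<subseteq> words n"
    and E_disj: "\<forall>k\<in>{1..M}. \<forall>k'\<in>{1..M}. k \<noteq> k' \<longrightarrow> E k \<inter> E k' = {}"
    and E_err: "\<forall>k\<in>{1..M}. Wset W (u k) (words n - E k) \<le> \<delta>"
    and \<epsilon>: "\<epsilon> < 1/6" "2 powr (- (real n * (C - \<xi>))) \<le> \<epsilon>"
    and m: "0 < m"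
    and m_bound: "let M' = nat \<lceil>\<epsilon> * real M\<rceil>; L = nat \<lceil>lam * real M'\<rceil> in
         (2::real) ^ m \<le> inverse (real (M' choose L)) * inverse (real M') * ((1 - \<epsilon>) / (2 * \<epsilon>)) ^ L"
    and A_sub: "\<forall>i\<in>words m. A i \<subseteq> u ` {1..M}"
    and A_card: "\<forall>i\<in>words m. card (A i) = nat \<lceil>\<epsilon> * real M\<rceil>"
    and A_int: "\<forall>i\<in>words m. \<forall>i'\<in>words m. i \<noteq> i' \<longrightarrow>
         real (card (A i \<inter> A i')) < lam * real (nat \<lceil>\<epsilon> * real M\<rceil>)"
  shows "bfc_code n m (boolfuns_weight m S) \<delta> (real S * lam + \<delta>) W
           (\<lambda>i xs. if xs \<in> A i then 1 / real (card (A i)) else 0)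
           (\<lambda>f. \<Union>{E k | k. k \<in> {1..M} \<and> u k \<in> (\<Union>l\<in>preimage1 m f. A l)})"
proof -
  have "\<epsilon> * real M \<ge> 2 powr (- (real n * (C - \<xi>))) * real M"
    using \<epsilon>(2) by (simp add: mult_right_mono)
  also have "2 powr (- (real n * (C - \<xi>))) * real M = 1"
    using M by (simp add: powr_minus)
  finally have "0 < nat \<lceil>\<epsilon> * real M\<rceil>"
    by linarith
  from bfc_code_uniform_on_decoding_set[OF W _ _ u_len E_sub E_disj E_err A_sub A_card this]
  show ?thesis
    using \<delta> lam A_int unfolding uniform_on_def decoding_set_def
    by (simp add: less_imp_le)
qed

end
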